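(* Let $E$ be a linear space of bounded, uniformly continuous complex-valued functions on $\mathbb{R}$ which is closed under uniform convergence on $\mathbb{R}$ and invariant under translations (if $f\in E$ then $f(\cdot+t)\in E$ for every $t\in\mathbb{R}$). Let $A:E\to E$ be a linear operator such that $\|Af\|_\infty\le a\|f\|_\infty$ for all $f\in E$ (with a constant $a\ge 0$), and suppose $A$ commutes with translations: $A\big(f(\cdot+t)\big)=(Af)(\cdot+t)$ for all $f\in E$, $t\in\mathbb{R}$. Then for every $p\in[1,+\infty)$, every $N>0$ and every $f\in E$, $$\|Af\|_{p,N}\le a\,\|f\|_{p,N}.$$
   Context: For $N>0$ and $p\in[1,\infty)$ define $\|f\|_{p,N}=\sup_{x\in\mathbb{R}}\Big(\int_{x-N}^{x+N}|f(t)|^p\,dt\Big)^{1/p}$. Also $\|f\|_\infty=\sup_{x\in\mathbb{R}}|f(x)|$. *)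

theory Defs
  imports "HOL-Analysis.Analysis"
begin

definition sup_norm :: "(real \<Rightarrow> complex) \<Rightarrow> real" where
  "sup_norm f = (SUP x. norm (f x))"

definition pN_norm :: "real \<Rightarrow> real \<Rightarrow> (real \<Rightarrow> complex) \<Rightarrow> real" where
  "pN_norm p N f = (SUP x. (integral {x - N..x + N} (\<lambda>t. norm (f t) powr p)) powr (1 / p))"

end

theory Submission
  imports Defs
begin

text \<open>Fix x and replace the integral of |Af|^p over [x-N, x+N] by a Riemann sum
  S = \<Sum>k h |u k|^p with samples u k = (Af)(x + s k). Duality turns this into a sup-norm
  question: the test function g = \<Sum>k c k f(_ + s k) with c k = h |u k|^(p-2) conj (u k)
  lies in E and, by linearity and translation invariance, satisfies (Ag)(x) = S, so
  S \<le> a * sup_norm g. Young's inequality bounds |g(y)| by (1 - 1/p) S / a plus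
  (1/p) a^(p-1) times a Riemann sum of |f|^p over [y-N, y+N], which is at most
  pN_norm p N f ^ p up to the discretisation error. Solving for S gives
  S \<le> a^p * pN_norm p N f ^ p, and refining the mesh yields the claim.\<close>

lemma norm_le_sup_norm:
  assumes "bounded (range F)"
  shows "norm (F x) \<le> sup_norm F"
proof -
  have "bdd_above (range (\<lambda>x. norm (F x)))"
    using assms by (metis bdd_above_norm image_image)
  then show ?thesis
    unfolding sup_norm_def using cSUP_upper[of x UNIV "\<lambda>x. norm (F x)"] by simp
qed

lemma sup_norm_le:
  assumes "\<And>x. norm (F x) \<le> K"
  shows "sup_norm F \<le> K"
  unfolding sup_norm_def by (rule cSUP_least) (use assms in auto)

lemma integral_left_endpoint_approx:
  fixes \<phi> :: "real \<Rightarrow> real"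
  assumes "continuous_on {c..c+h} \<phi>" "0 \<le> h"
    and "\<And>t. t \<in> {c..c+h} \<Longrightarrow> \<bar>\<phi> t - \<phi> c\<bar> \<le> e"
  shows "\<bar>integral {c..c+h} \<phi> - h * \<phi> c\<bar> \<le> h * e"
proof -
  have int: "\<phi> integrable_on {c..c+h}"
    using assms(1) by (rule integrable_continuous_interval)
  have bound: "\<phi> c - e \<le> \<phi> t \<and> \<phi> t \<le> \<phi> c + e" if "t \<in> {c..c+h}" for t
    using assms(3)[OF that] by linarith
  have "integral {c..c+h} \<phi> \<le> integral {c..c+h} (\<lambda>t. \<phi> c + e)"
    by (rule integral_le[OF int]) (use bound in auto)
  moreover have "integral {c..c+h} (\<lambda>t. \<phi> c - e) \<le> integral {c..c+h} \<phi>"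
    by (rule integral_le[OF _ int]) (use bound in auto)
  ultimately show ?thesis using assms(2) by (auto simp: algebra_simps)
qed

lemma integral_split_uniform:
  fixes \<phi> :: "real \<Rightarrow> real"
  assumes "continuous_on {c..c + real m * h} \<phi>" "0 \<le> h"
  shows "integral {c..c + real m * h} \<phi> = (\<Sum>k<m. integral {c + real k * h..c + real k * h + h} \<phi>)"
  using assms(1)
proof (induction m)
  case 0
  then show ?case by simp
next
  case (Suc m)
  have step: "c + real m * h \<le> c + real (Suc m) * h"
    using assms(2) by (simp add: algebra_simps)
  then have sub: "{c..c + real m * h} \<subseteq> {c..c + real (Suc m) * h}"
    by auto
  have "integral {c..c + real m * h} \<phi> + integral {c + real m * h..c + real (Suc m) * h} \<phi>
        = integral {c..c + real (Suc m) * h} \<phi>"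
    by (rule Henstock_Kurzweil_Integration.integral_combine[OF _ step integrable_continuous_interval[OF Suc.prems]])
      (use assms(2) in simp)
  then show ?case
    using Suc.IH[OF continuous_on_subset[OF Suc.prems sub]] by (simp add: algebra_simps)
qed

lemma riemann_sum_approx:
  fixes \<phi> :: "real \<Rightarrow> real"
  assumes "continuous_on {a..b} \<phi>" "a \<le> b" "0 < n"
    and "\<And>s t. s \<in> {a..b} \<Longrightarrow> t \<in> {a..b} \<Longrightarrow> \<bar>s - t\<bar> \<le> (b - a) / n \<Longrightarrow> \<bar>\<phi> s - \<phi> t\<bar> \<le> e"
  shows "\<bar>integral {a..b} \<phi> - (\<Sum>k<n. (b - a) / n * \<phi> (a + real k * ((b - a) / n)))\<bar> \<le> (b - a) * e"
proof -
  define h where "h = (b - a) / n"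
  have h0: "0 \<le> h" using assms by (simp add: h_def)
  have b: "b = a + real n * h" using assms by (simp add: h_def)
  have piece: "\<bar>integral {a + real k * h..a + real k * h + h} \<phi> - h * \<phi> (a + real k * h)\<bar> \<le> h * e"
    if "k < n" for k
  proof -
    have "real k * h + h = real (Suc k) * h" by (simp add: algebra_simps)
    also have "\<dots> \<le> real n * h" using that h0 by (intro mult_right_mono) auto
    finally have "real k * h + h \<le> real n * h" .
    then have sub: "{a + real k * h..a + real k * h + h} \<subseteq> {a..b}"
      using h0 b by (auto intro: order_trans)
    show ?thesis
      by (rule integral_left_endpoint_approx[OF continuous_on_subset[OF assms(1) sub] h0])
        (use assms(4) sub h_def in auto)
  qed
  have "integral {a..b} \<phi> = (\<Sum>k<n. integral {a + real k * h..a + real k * h + h} \<phi>)"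
    using assms(1) h0 unfolding b by (rule integral_split_uniform)
  then have "\<bar>integral {a..b} \<phi> - (\<Sum>k<n. h * \<phi> (a + real k * h))\<bar>
      = \<bar>\<Sum>k<n. integral {a + real k * h..a + real k * h + h} \<phi> - h * \<phi> (a + real k * h)\<bar>"
    by (simp add: sum_subtractf)
  also have "\<dots> \<le> (\<Sum>k<n. h * e)"
    by (rule order_trans[OF sum_abs sum_mono]) (use piece in auto)
  also have "\<dots> = (b - a) * e" using assms by (simp add: h_def)
  finally show ?thesis by (simp add: h_def)
qed

lemma weighted_am_gm:
  fixes x y \<theta> :: real
  assumes "0 \<le> x" "0 \<le> y" "0 \<le> \<theta>" "\<theta> \<le> 1"
  shows "x powr (1 - \<theta>) * y powr \<theta> \<le> (1 - \<theta>) * x + \<theta> * y"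
proof (cases "x = 0 \<or> y = 0")
  case True
  then show ?thesis using assms by auto
next
  case False
  then show ?thesis using Youngs_inequality_0[of "1 - \<theta>" \<theta> x y] assms by auto
qed

lemma Young_inequality_scaled:
  fixes u w a p :: real
  assumes "0 \<le> u" "0 \<le> w" "0 < a" "1 \<le> p"
  shows "u powr (p - 1) * w \<le> (1 - 1/p) * (u powr p / a) + 1/p * (a powr (p - 1) * w powr p)"
proof -
  have "(u powr p / a) powr (1 - 1/p) = u powr (p * (1 - 1/p)) / a powr (1 - 1/p)"
    using assms by (simp add: powr_divide powr_powr)
  moreover have "(a powr (p - 1) * w powr p) powr (1/p) = a powr ((p - 1) * (1/p)) * w"
    using assms by (simp add: powr_mult powr_powr)
  moreover have "p * (1 - 1/p) = p - 1" "(p - 1) * (1/p) = 1 - 1/p"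
    using assms by (auto simp: field_simps)
  ultimately have "(u powr p / a) powr (1 - 1/p) * (a powr (p - 1) * w powr p) powr (1/p)
      = u powr (p - 1) * w"
    using assms by simp
  moreover have "(u powr p / a) powr (1 - 1/p) * (a powr (p - 1) * w powr p) powr (1/p)
      \<le> (1 - 1/p) * (u powr p / a) + 1/p * (a powr (p - 1) * w powr p)"
    by (rule weighted_am_gm) (use assms in auto)
  ultimately show ?thesis by simp
qed

lemma uniformly_continuous_on_norm_powr:
  fixes F :: "real \<Rightarrow> 'b::real_normed_vector"
  assumes "uniformly_continuous_on UNIV F" "bounded (range F)" "0 < p"
  shows "uniformly_continuous_on UNIV (\<lambda>t. norm (F t) powr p)"
proof -
  obtain K where K: "\<And>t. norm (F t) \<le> K"
    using assms(2) by (meson bounded_iff rangeI)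
  have "uniformly_continuous_on UNIV (\<lambda>t. norm (F t))"
    using assms(1) by (rule uniformly_continuous_on_norm)
  moreover have "uniformly_continuous_on {0..K} (\<lambda>x::real. x powr p)"
    by (intro compact_uniformly_continuous continuous_on_powr')
      (use assms(3) in \<open>auto intro: continuous_intros\<close>)
  then have "uniformly_continuous_on (range (\<lambda>t. norm (F t))) (\<lambda>x::real. x powr p)"
    using K unfolding uniformly_continuous_on_def
    by (smt (verit, best) atLeastAtMost_iff norm_ge_zero rangeE)
  ultimately show ?thesis
    using uniformly_continuous_on_compose by blast
qed

lemma uniformly_continuous_on_UNIV_le:
  fixes \<phi> :: "real \<Rightarrow> real"
  assumes "uniformly_continuous_on UNIV \<phi>" "0 < e"
  obtains d where "0 < d" "\<And>s t. \<bar>s - t\<bar> \<le> d \<Longrightarrow> \<bar>\<phi> s - \<phi> t\<bar> \<le> e"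
proof -
  obtain d where d: "0 < d" "\<And>x x'. dist x' x < d \<Longrightarrow> dist (\<phi> x') (\<phi> x) < e"
    using assms unfolding uniformly_continuous_on_def by blast
  show ?thesis
  proof (rule that[of "d/2"])
    fix s t :: real
    assume "\<bar>s - t\<bar> \<le> d/2"
    then show "\<bar>\<phi> s - \<phi> t\<bar> \<le> e"
      using d by (smt (verit) dist_real_def field_sum_of_halves)
  qed (use d in simp)
qed

definition window_integral :: "real \<Rightarrow> real \<Rightarrow> (real \<Rightarrow> complex) \<Rightarrow> real \<Rightarrow> real" where
  "window_integral p N F x = integral {x - N..x + N} (\<lambda>t. norm (F t) powr p)"

lemma window_integral_nonneg: "0 \<le> window_integral p N F x"
  unfolding window_integral_def
  by (cases "(\<lambda>t. norm (F t) powr p) integrable_on {x - N..x + N}")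
    (auto intro: integral_nonneg simp: not_integrable_integral)

lemma continuous_on_norm_powr:
  fixes F :: "'a::topological_space \<Rightarrow> 'b::real_normed_vector"
  assumes "continuous_on S F" "0 < p"
  shows "continuous_on S (\<lambda>t. norm (F t) powr p)"
  using assms by (intro continuous_on_powr' continuous_intros) auto

lemma window_integral_powr_le_pN_norm:
  assumes "bounded (range F)" "continuous_on UNIV F" "0 < p" "0 \<le> N"
  shows "window_integral p N F x powr (1/p) \<le> pN_norm p N F"
proof -
  obtain K where K: "\<And>t. norm (F t) \<le> K"
    using assms(1) by (meson bounded_iff rangeI)
  have int: "(\<lambda>t. norm (F t) powr p) integrable_on {y - N..y + N}" for y
    by (rule integrable_continuous_interval)
      (use continuous_on_norm_powr[OF assms(2,3)] continuous_on_subset in blast)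
  have "window_integral p N F y \<le> 2 * N * K powr p" for y
  proof -
    have "window_integral p N F y \<le> integral {y - N..y + N} (\<lambda>t. K powr p)"
      unfolding window_integral_def
      by (rule integral_le[OF int integrable_const_ivl]) (use K assms(3) in \<open>simp add: powr_mono2\<close>)
    then show ?thesis
      using assms(4) by simp
  qed
  then have "window_integral p N F y powr (1/p) \<le> (2 * N * K powr p) powr (1/p)" for y
    using window_integral_nonneg assms(3) by (simp add: powr_mono2)
  then show ?thesis
    unfolding pN_norm_def window_integral_def[symmetric]
    by (intro cSUP_upper bdd_aboveI2) auto
qed

lemma window_integral_le_pN_norm_powr:
  assumes "bounded (range F)" "continuous_on UNIV F" "0 < p" "0 \<le> N"
  shows "window_integral p N F x \<le> pN_norm p N F powr p"
proof -
  have "(window_integral p N F x powr (1/p)) powr p \<le> pN_norm p N F powr p"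
    using window_integral_powr_le_pN_norm[OF assms] assms(3) by (simp add: powr_mono2)
  then show ?thesis
    using window_integral_nonneg assms(3) by (simp add: powr_powr)
qed

lemma pN_norm_nonneg:
  assumes "bounded (range F)" "continuous_on UNIV F" "0 < p" "0 \<le> N"
  shows "0 \<le> pN_norm p N F"
  using window_integral_powr_le_pN_norm[OF assms] powr_ge_zero order_trans by blast

lemma pN_norm_le_if_window_integral_le:
  assumes "\<And>x. window_integral p N F x \<le> B powr p" "0 \<le> B" "0 < p"
  shows "pN_norm p N F \<le> B"
  unfolding pN_norm_def window_integral_def[symmetric]
proof (rule cSUP_least)
  fix x
  have "window_integral p N F x powr (1/p) \<le> (B powr p) powr (1/p)"
    using assms window_integral_nonneg by (intro powr_mono2) auto
  also have "\<dots> = B"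
    using assms by (simp add: powr_powr)
  finally show "window_integral p N F x powr (1/p) \<le> B" .
qed simp

lemma window_riemann_sum_eventually:
  fixes F :: "real \<Rightarrow> complex"
  assumes "uniformly_continuous_on UNIV F" "bounded (range F)" "0 < p" "0 < N" "0 < e"
  shows "\<forall>\<^sub>F n in sequentially. \<forall>y. \<bar>window_integral p N F y
           - (\<Sum>k<n. 2 * N / n * norm (F (y + (real k * (2 * N / n) - N))) powr p)\<bar> \<le> e"
proof -
  define \<phi> where "\<phi> t = norm (F t) powr p" for t
  have uc: "uniformly_continuous_on UNIV \<phi>"
    unfolding \<phi>_def using assms(1-3) by (rule uniformly_continuous_on_norm_powr)
  have "0 < e / (2 * N)"
    using assms(4,5) by simp
  then obtain d where d: "0 < d" "\<And>s t. \<bar>s - t\<bar> \<le> d \<Longrightarrow> \<bar>\<phi> s - \<phi> t\<bar> \<le> e / (2 * N)"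
    using uniformly_continuous_on_UNIV_le[OF uc] by blast
  obtain m :: nat where m: "2 * N / d < real m"
    using reals_Archimedean2 by blast
  show ?thesis
    unfolding eventually_sequentially
  proof (intro exI allI impI)
    fix n y
    assume "m \<le> n"
    then have n: "2 * N / d < real n"
      using m by linarith
    moreover have "0 < 2 * N / d"
      using assms(4) d(1) by simp
    ultimately have n_pos: "0 < n"
      by simp
    have mesh: "2 * N / n \<le> d"
      using n n_pos d(1) by (simp add: field_simps)
    have cont: "continuous_on {y - N..y + N} \<phi>"
      using uniformly_continuous_imp_continuous[OF uc] by (rule continuous_on_subset) simp
    have "\<bar>integral {y - N..y + N} \<phi>
        - (\<Sum>k<n. ((y + N) - (y - N)) / n * \<phi> (y - N + real k * (((y + N) - (y - N)) / n)))\<bar>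
        \<le> ((y + N) - (y - N)) * (e / (2 * N))"
      by (rule riemann_sum_approx[OF cont]) (use assms(4) n_pos mesh in \<open>auto intro: d(2)\<close>)
    then show "\<bar>window_integral p N F y
        - (\<Sum>k<n. 2 * N / n * norm (F (y + (real k * (2 * N / n) - N))) powr p)\<bar> \<le> e"
      using assms(4) unfolding window_integral_def \<phi>_def by (simp add: algebra_simps)
  qed
qed

lemma cnj_mult_norm_powr:
  fixes u :: complex
  shows "complex_of_real (norm u powr (p - 2)) * cnj u * u = complex_of_real (norm u powr p)"
proof (cases "u = 0")
  case False
  have "norm u powr (p - 2) * (norm u)\<^sup>2 = norm u powr p"
    using False powr_add[of "norm u" "p - 2" 2] by (simp add: powr_numeral)
  moreover have "cnj u * u = complex_of_real ((norm u)\<^sup>2)"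
    by (metis complex_norm_square mult.commute of_real_power)
  ultimately show ?thesis
    by (metis mult.assoc of_real_mult)
qed simp

lemma norm_powr_minus_two_mult:
  fixes u :: complex
  shows "norm u powr (p - 2) * norm u = norm u powr (p - 1)"
proof (cases "u = 0")
  case False
  then show ?thesis
    using powr_add[of "norm u" "p - 2" 1] by simp
qed simp

locale translation_invariant_operator =
  fixes E :: "(real \<Rightarrow> complex) set"
    and A :: "(real \<Rightarrow> complex) \<Rightarrow> (real \<Rightarrow> complex)"
    and a :: real
  assumes E_bounded: "\<And>f. f \<in> E \<Longrightarrow> bounded (range f)"
    and E_unif_cont: "\<And>f. f \<in> E \<Longrightarrow> uniformly_continuous_on UNIV f"
    and E_zero: "(\<lambda>x. 0) \<in> E"
    and E_add: "\<And>f g. f \<in> E \<Longrightarrow> g \<in> E \<Longrightarrow> (\<lambda>x. f x + g x) \<in> E"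
    and E_scale: "\<And>c f. f \<in> E \<Longrightarrow> (\<lambda>x. c * f x) \<in> E"
    and E_transl: "\<And>f t. f \<in> E \<Longrightarrow> (\<lambda>x. f (x + t)) \<in> E"
    and A_maps: "\<And>f. f \<in> E \<Longrightarrow> A f \<in> E"
    and A_add: "\<And>f g. f \<in> E \<Longrightarrow> g \<in> E \<Longrightarrow> A (\<lambda>x. f x + g x) = (\<lambda>x. A f x + A g x)"
    and A_scale: "\<And>c f. f \<in> E \<Longrightarrow> A (\<lambda>x. c * f x) = (\<lambda>x. c * A f x)"
    and a_nonneg: "0 \<le> a"
    and A_bound: "\<And>f. f \<in> E \<Longrightarrow> sup_norm (A f) \<le> a * sup_norm f"
    and A_transl: "\<And>f t. f \<in> E \<Longrightarrow> A (\<lambda>x. f (x + t)) = (\<lambda>x. A f (x + t))"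
begin

lemma translate_sum:
  assumes "f \<in> E" "finite K"
  shows "(\<lambda>z. \<Sum>k\<in>K. c k * f (z + s k)) \<in> E"
    and "A (\<lambda>z. \<Sum>k\<in>K. c k * f (z + s k)) = (\<lambda>z. \<Sum>k\<in>K. c k * A f (z + s k))"
proof -
  have "(\<lambda>z. \<Sum>k\<in>K. c k * f (z + s k)) \<in> E \<and>
      A (\<lambda>z. \<Sum>k\<in>K. c k * f (z + s k)) = (\<lambda>z. \<Sum>k\<in>K. c k * A f (z + s k))"
    using assms(2)
  proof (induction K rule: finite_induct)
    case empty
    have "A (\<lambda>x. 0 * f x) = (\<lambda>x. 0 * A f x)"
      using assms(1) by (rule A_scale)
    then show ?case using E_zero by simp
  next
    case (insert k K)
    define t where "t = (\<lambda>z. f (z + s k))"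
    have tE: "t \<in> E" and ctE: "(\<lambda>z. c k * t z) \<in> E"
      unfolding t_def using assms(1) by (auto intro: E_transl E_scale)
    have At: "A t = (\<lambda>z. A f (z + s k))"
      unfolding t_def using assms(1) by (rule A_transl)
    have "(\<lambda>z. \<Sum>k\<in>insert k K. c k * f (z + s k)) = (\<lambda>z. c k * t z + (\<Sum>k\<in>K. c k * f (z + s k)))"
      using insert.hyps by (simp add: t_def)
    then show ?case
      using E_add[OF ctE] A_add[OF ctE] A_scale[OF tE, of "c k"] At insert.IH insert.hyps
      by simp
  qed
  then show "(\<lambda>z. \<Sum>k\<in>K. c k * f (z + s k)) \<in> E"
    and "A (\<lambda>z. \<Sum>k\<in>K. c k * f (z + s k)) = (\<lambda>z. \<Sum>k\<in>K. c k * A f (z + s k))"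
    by auto
qed

lemma sum_translates_A_le:
  assumes f: "f \<in> E" and K: "finite K" and w: "\<And>k. 0 \<le> w k" and p: "1 \<le> p"
    and M: "\<And>y. (\<Sum>k\<in>K. w k * norm (f (y + s k)) powr p) \<le> M"
  shows "(\<Sum>k\<in>K. w k * norm (A f (x + s k)) powr p) \<le> a powr p * M"
proof -
  define u where "u k = A f (x + s k)" for k
  define S where "S = (\<Sum>k\<in>K. w k * norm (u k) powr p)"
  define c where "c k = complex_of_real (w k * norm (u k) powr (p - 2)) * cnj (u k)" for k
  define g where "g = (\<lambda>z. \<Sum>k\<in>K. c k * f (z + s k))"
  have gE: "g \<in> E"
    unfolding g_def using f K by (rule translate_sum)
  have "A g x = (\<Sum>k\<in>K. c k * u k)"
    unfolding g_def translate_sum(2)[OF f K] u_def ..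
  also have "\<dots> = complex_of_real S"
    unfolding S_def c_def using cnj_mult_norm_powr by (simp add: mult.assoc)
  finally have Agx: "A g x = complex_of_real S" .
  have S_nonneg: "0 \<le> S"
    unfolding S_def using w by (auto intro!: sum_nonneg)
  have norm_c: "norm (c k) = w k * norm (u k) powr (p - 1)" for k
    unfolding c_def norm_mult complex_mod_cnj norm_of_real
    using w[of k] norm_powr_minus_two_mult[of "u k" p] by (simp add: mult.assoc)
  have "S = norm (A g x)"
    using Agx S_nonneg by simp
  also have "\<dots> \<le> sup_norm (A g)"
    by (rule norm_le_sup_norm[OF E_bounded[OF A_maps[OF gE]]])
  also have "\<dots> \<le> a * sup_norm g"
    by (rule A_bound[OF gE])
  finally have S_le: "S \<le> a * sup_norm g" .
  show ?thesis
  proof (cases "a = 0")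
    case True
    then show ?thesis using S_le S_nonneg unfolding S_def u_def by simp
  next
    case False
    then have a: "0 < a" using a_nonneg by simp
    have "sup_norm g \<le> (1 - 1/p) / a * S + 1/p * a powr (p - 1) * M"
    proof (rule sup_norm_le)
      fix y
      have "norm (g y) \<le> (\<Sum>k\<in>K. w k * (norm (u k) powr (p - 1) * norm (f (y + s k))))"
        unfolding g_def using norm_sum[of "\<lambda>k. c k * f (y + s k)" K]
        by (simp add: norm_mult norm_c mult.assoc)
      also have "\<dots> \<le> (\<Sum>k\<in>K. w k * ((1 - 1/p) * (norm (u k) powr p / a)
          + 1/p * (a powr (p - 1) * norm (f (y + s k)) powr p)))"
        by (intro sum_mono mult_left_mono Young_inequality_scaled) (use a p w in auto)
      also have "\<dots> = (1 - 1/p) / a * S + 1/p * a powr (p - 1) * (\<Sum>k\<in>K. w k * norm (f (y + s k)) powr p)"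
        unfolding S_def by (simp add: sum.distrib sum_distrib_left algebra_simps)
      also have "\<dots> \<le> (1 - 1/p) / a * S + 1/p * a powr (p - 1) * M"
        using M[of y] p by (intro add_left_mono mult_left_mono) auto
      finally show "norm (g y) \<le> (1 - 1/p) / a * S + 1/p * a powr (p - 1) * M" .
    qed
    then have "S \<le> a * ((1 - 1/p) / a * S + 1/p * a powr (p - 1) * M)"
      using S_le a by (meson mult_left_mono order_trans less_imp_le)
    also have "\<dots> = (1 - 1/p) * S + 1/p * (a powr 1 * a powr (p - 1)) * M"
      using a by (simp add: field_simps)
    also have "\<dots> = (1 - 1/p) * S + 1/p * a powr p * M"
      using powr_add[of a 1 "p - 1"] a by simp
    finally have "1/p * S \<le> 1/p * (a powr p * M)"
      by (simp add: algebra_simps)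
    then show ?thesis
      using p unfolding S_def u_def by (simp add: divide_le_cancel)
  qed
qed

lemma window_integral_A_le:
  assumes f: "f \<in> E" and p: "1 \<le> p" and N: "0 < N"
  shows "window_integral p N (A f) x \<le> a powr p * pN_norm p N f powr p"
proof (rule field_le_epsilon)
  fix e :: real
  assume "0 < e"
  define P where "P = pN_norm p N f"
  define e' where "e' = e / (a powr p + 1)"
  have e': "0 < e'"
    using \<open>0 < e\<close> by (simp add: e'_def add_nonneg_pos)
  have Af: "A f \<in> E"
    using f by (rule A_maps)
  have "0 < p"
    using p by simp
  obtain n where
    "(\<forall>y. \<bar>window_integral p N f y
        - (\<Sum>k<n. 2 * N / n * norm (f (y + (real k * (2 * N / n) - N))) powr p)\<bar> \<le> e') \<and>
     (\<forall>y. \<bar>window_integral p N (A f) y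
        - (\<Sum>k<n. 2 * N / n * norm (A f (y + (real k * (2 * N / n) - N))) powr p)\<bar> \<le> e')"
    using eventually_conj
      [OF window_riemann_sum_eventually[OF E_unif_cont[OF f] E_bounded[OF f] \<open>0 < p\<close> N e']
          window_riemann_sum_eventually[OF E_unif_cont[OF Af] E_bounded[OF Af] \<open>0 < p\<close> N e']]
    unfolding eventually_sequentially by blast
  then have
    Rf: "\<And>y. \<bar>window_integral p N f y
           - (\<Sum>k<n. 2 * N / n * norm (f (y + (real k * (2 * N / n) - N))) powr p)\<bar> \<le> e'" and
    RA: "\<And>y. \<bar>window_integral p N (A f) y
           - (\<Sum>k<n. 2 * N / n * norm (A f (y + (real k * (2 * N / n) - N))) powr p)\<bar> \<le> e'"
    by blast+
  have f_window: "window_integral p N f y \<le> P powr p" for y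
    unfolding P_def using p N
    by (intro window_integral_le_pN_norm_powr E_bounded[OF f]
        uniformly_continuous_imp_continuous[OF E_unif_cont[OF f]]) auto
  then have "(\<Sum>k<n. 2 * N / n * norm (f (y + (real k * (2 * N / n) - N))) powr p) \<le> P powr p + e'" for y
    using Rf[of y] f_window[of y] by linarith
  then have "(\<Sum>k<n. 2 * N / n * norm (A f (x + (real k * (2 * N / n) - N))) powr p)
      \<le> a powr p * (P powr p + e')"
    using N by (intro sum_translates_A_le[OF f _ _ p]) auto
  then have "window_integral p N (A f) x \<le> a powr p * P powr p + e' * (a powr p + 1)"
    using RA[of x] by (simp add: algebra_simps)
  also have "e' * (a powr p + 1) = e"
  proof -
    have "a powr p + 1 \<noteq> 0"
      using powr_ge_zero[of a p] by linarith
    then show ?thesis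
      unfolding e'_def by simp
  qed
  finally show "window_integral p N (A f) x \<le> a powr p * pN_norm p N f powr p + e"
    unfolding P_def .
qed

end

theorem theorem1p2p7:
  fixes E :: "(real \<Rightarrow> complex) set"
    and A :: "(real \<Rightarrow> complex) \<Rightarrow> (real \<Rightarrow> complex)"
    and a :: real
  assumes E_bounded: "\<And>f. f \<in> E \<Longrightarrow> bounded (range f)"
    and E_unif_cont: "\<And>f. f \<in> E \<Longrightarrow> uniformly_continuous_on UNIV f"
    and E_zero: "(\<lambda>x. 0) \<in> E"
    and E_add: "\<And>f g. f \<in> E \<Longrightarrow> g \<in> E \<Longrightarrow> (\<lambda>x. f x + g x) \<in> E"
    and E_scale: "\<And>c f. f \<in> E \<Longrightarrow> (\<lambda>x. c * f x) \<in> E"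
    and E_closed: "\<And>fs g. (\<And>n. fs n \<in> E) \<Longrightarrow> uniform_limit UNIV fs g sequentially \<Longrightarrow> g \<in> E"
    and E_transl: "\<And>f t. f \<in> E \<Longrightarrow> (\<lambda>x. f (x + t)) \<in> E"
    and A_maps: "\<And>f. f \<in> E \<Longrightarrow> A f \<in> E"
    and A_add: "\<And>f g. f \<in> E \<Longrightarrow> g \<in> E \<Longrightarrow> A (\<lambda>x. f x + g x) = (\<lambda>x. A f x + A g x)"
    and A_scale: "\<And>c f. f \<in> E \<Longrightarrow> A (\<lambda>x. c * f x) = (\<lambda>x. c * A f x)"
    and a_nonneg: "a \<ge> 0"
    and A_bound: "\<And>f. f \<in> E \<Longrightarrow> sup_norm (A f) \<le> a * sup_norm f"
    and A_transl: "\<And>f t. f \<in> E \<Longrightarrow> A (\<lambda>x. f (x + t)) = (\<lambda>x. A f (x + t))"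
    and p: "1 \<le> p"
    and N: "0 < N"
    and f: "f \<in> E"
  shows "pN_norm p N (A f) \<le> a * pN_norm p N f"
proof -
  interpret translation_invariant_operator E A a
    by unfold_locales (fact assms)+
  have "0 \<le> pN_norm p N f"
    using p N by (intro pN_norm_nonneg E_bounded[OF f]
        uniformly_continuous_imp_continuous[OF E_unif_cont[OF f]]) auto
  show ?thesis
  proof (rule pN_norm_le_if_window_integral_le)
    fix x
    show "window_integral p N (A f) x \<le> (a * pN_norm p N f) powr p"
      using window_integral_A_le[OF f p N] a_nonneg \<open>0 \<le> pN_norm p N f\<close>
      by (simp add: powr_mult)
  qed (use a_nonneg \<open>0 \<le> pN_norm p N f\<close> p in auto)
qed

end
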